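(* Let $g(x_0,\dots,x_m)$ be a nonsingular $m$-stage FSR (characteristic function) and $f(x_0,\dots,x_m)=g(x_0,\dots,x_m)\oplus f_3(x_1,\dots,x_{m-1})$, where $f_3:\{0,1\}^{m-1}\to\{0,1\}$. Let $\lambda:\{0,1\}^m\to\{0,1\}$ satisfy: (a) $|\{v\in\Omega_m(c):\lambda(v)=1\}|\le1$ for every $c\in\Omega(g)$; (b) $\lambda(v)\cdot\lambda(v')=0$ for every $v\in\{0,1\}^m$; (c) for every $u\in\{0,1\}^{m-1}$ with $f_3(u)=1$ there is $b\in\{0,1\}$ with $\lambda(b\parallel u)=1$. Let $D$ be the directed graph with vertex set $\Omega(g)$ having an arc from $c_1$ to $c_2$ iff there exists $v\in\Omega_m(c_1)$ with $f_3(\mathrm{lbit}_{m-1}(v))=1$, $\lambda(v)=1$ and $v'\in\Omega_m(c_2)$. If $D$ is acyclic, then: (i) for every $d\in\Omega(f)$ there is a weakly connected component $\mathcal C$ of $D$ such that $\Omega_m(d)=\bigcup_{c\in\mathcal C}\Omega_m(c)$; (ii) if $h$ is a subFSR of $f$, then $\Omega(h)\subseteq\Omega(g)$.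
   Context: An $m$-stage FSR with feedback logic $f_1$ has characteristic function $f(x_0,\dots,x_m)=x_m\oplus f_1(x_0,\dots,x_{m-1})$, state transformation $F(x_0,\dots,x_{m-1})=(x_1,\dots,x_{m-1},f_1(x_0,\dots,x_{m-1}))$, and generates the sequences $s$ with $f(s(t),\dots,s(t+m))=0$ for all $t$; it is nonsingular if $F$ is bijective. A periodic sequence $s$ of least period $p$ determines the cycle $[s(0),\dots,s(p-1)]$ (shifts give the same cycle); $\Omega(f)$ is the set of cycles of sequences generated by $f$, and $\Omega_k(c)=\{(s(i),s((i+1)\bmod p),\dots,s((i+k-1)\bmod p)):0\le i<p\}$. For $v\in\{0,1\}^m$, $v'=v\oplus(1,0,\dots,0)$; $\mathrm{lbit}_{m-1}(v)$ is the vector of the last $m-1$ coordinates of $v$; $b\parallel u$ is concatenation. An $k$-stage FSR $h$ is a subFSR of the $m$-stage FSR $f$ if $k<m$ and every sequence generated by $h$ is generated by $f$. A weakly connected component of a directed graph is a connected component of the underlying undirected graph. *)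

theory Defs
  imports Main
begin

text \<open>Binary vectors in {0,1}^n are bool lists of length n (True = 1); xor is (\<noteq>).
  An m-stage FSR is given by its feedback logic f1 :: bool list \<Rightarrow> bool
  (meaningful on lists of length m).\<close>

definition char_fun :: "nat \<Rightarrow> (bool list \<Rightarrow> bool) \<Rightarrow> bool list \<Rightarrow> bool" where
  "char_fun m f1 xs = (xs ! m \<noteq> f1 (take m xs))"

definition state_trans :: "(bool list \<Rightarrow> bool) \<Rightarrow> bool list \<Rightarrow> bool list" where
  "state_trans f1 xs = tl xs @ [f1 xs]"

definition nonsingular :: "nat \<Rightarrow> (bool list \<Rightarrow> bool) \<Rightarrow> bool" where
  "nonsingular m f1 \<longleftrightarrow>
     bij_betw (state_trans f1) {xs. length xs = m} {xs. length xs = m}"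

definition generates :: "nat \<Rightarrow> (bool list \<Rightarrow> bool) \<Rightarrow> (nat \<Rightarrow> bool) \<Rightarrow> bool" where
  "generates m f1 s \<longleftrightarrow> (\<forall>t. char_fun m f1 (map s [t..<t+m+1]) = False)"

definition periodic_seq :: "(nat \<Rightarrow> bool) \<Rightarrow> bool" where
  "periodic_seq s \<longleftrightarrow> (\<exists>p>0. \<forall>t. s (t + p) = s t)"

definition cycle_of :: "(nat \<Rightarrow> bool) \<Rightarrow> (nat \<Rightarrow> bool) set" where
  "cycle_of s = {(\<lambda>t. s (t + i)) | i. True}"

definition Omega :: "nat \<Rightarrow> (bool list \<Rightarrow> bool) \<Rightarrow> (nat \<Rightarrow> bool) set set" where
  "Omega m f1 = {cycle_of s | s. generates m f1 s \<and> periodic_seq s}"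

definition Omega_k :: "nat \<Rightarrow> (nat \<Rightarrow> bool) set \<Rightarrow> bool list set" where
  "Omega_k k c = {map s [0..<k] | s. s \<in> c}"

definition flip_first :: "bool list \<Rightarrow> bool list" where
  "flip_first v = (\<not> hd v) # tl v"

definition lbit :: "nat \<Rightarrow> bool list \<Rightarrow> bool list" where
  "lbit k v = drop (length v - k) v"

definition subFSR :: "nat \<Rightarrow> (bool list \<Rightarrow> bool) \<Rightarrow> nat \<Rightarrow> (bool list \<Rightarrow> bool) \<Rightarrow> bool" where
  "subFSR k h m f1 \<longleftrightarrow> 0 < k \<and> k < m \<and> (\<forall>s. generates k h s \<longrightarrow> generates m f1 s)"

definition weak_components :: "'a set \<Rightarrow> ('a \<times> 'a) set \<Rightarrow> 'a set set" where
  "weak_components V A = {{y \<in> V. (x, y) \<in> (A \<union> A\<inverse>)\<^sup>*} | x. x \<in> V}"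

end

theory Submission
  imports Defs "HOL-Combinatorics.Transposition"
begin

text \<open>The state transformation of f is that of g preceded by the involution which swaps v and v'
  whenever f3 (lbit v) = 1; by (b) and (c) exactly one of v, v' is then marked by \<lambda>, so this
  involution is a product of disjoint transpositions (v v'), one per marked state v.
  Composing a permutation with a transposition whose two points lie in different cycles joins
  these two cycles. By (a) every cycle of g carries at most one marked state, so the arcs of D form
  a forest, and adding the transpositions one at a time, the two points of each new transposition
  are never already joined (otherwise D would contain a cycle). Hence the cycles of f are the unions
  of the cycles of g along the weak components of D. A subFSR h of f never uses a swapped state:
  the states v and v' lie on one cycle of f, have different successor bits under f, but agree on
  their last m - 1 bits, which determine the successor bit under h.\<close>

section \<open>Forward orbits of a permutation of a finite set\<close>

definition forward_orbit :: "('a \<Rightarrow> 'a) \<Rightarrow> 'a \<Rightarrow> 'a set" where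
  "forward_orbit P x = range (\<lambda>i. (P ^^ i) x)"

lemma forward_orbit_iff: "y \<in> forward_orbit P x \<longleftrightarrow> (\<exists>i. y = (P ^^ i) x)"
  unfolding forward_orbit_def by auto

lemma self_in_forward_orbit: "x \<in> forward_orbit P x"
  unfolding forward_orbit_iff by (rule exI[of _ 0]) simp

lemma forward_orbit_step: "y \<in> forward_orbit P x \<Longrightarrow> P y \<in> forward_orbit P x"
  unfolding forward_orbit_iff by (metis funpow.simps(2) o_apply)

lemma forward_orbit_trans:
  assumes "y \<in> forward_orbit P x" "z \<in> forward_orbit P y"
  shows "z \<in> forward_orbit P x"
proof -
  obtain i j where "y = (P ^^ i) x" "z = (P ^^ j) y"
    using assms unfolding forward_orbit_iff by blast
  then have "z = (P ^^ (j + i)) x" by (simp add: funpow_add)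
  then show ?thesis unfolding forward_orbit_iff by blast
qed

lemma forward_orbit_induct [consumes 1, case_names base step]:
  assumes "y \<in> forward_orbit P x" "Q x" "\<And>z. Q z \<Longrightarrow> Q (P z)"
  shows "Q y"
proof -
  have "Q ((P ^^ i) x)" for i by (induction i) (simp_all add: assms(2,3))
  then show ?thesis using assms(1) unfolding forward_orbit_iff by auto
qed

lemma forward_orbit_subset_closed:
  assumes "x \<in> Z" "\<And>z. z \<in> Z \<Longrightarrow> P z \<in> Z"
  shows "forward_orbit P x \<subseteq> Z"
  using forward_orbit_induct[where Q = "\<lambda>z. z \<in> Z"] assms by blast

lemma forward_orbit_mono: "y \<in> forward_orbit P x \<Longrightarrow> forward_orbit P y \<subseteq> forward_orbit P x"
  by (blast intro: forward_orbit_trans)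

locale finite_permutation =
  fixes S :: "'a set" and P :: "'a \<Rightarrow> 'a"
  assumes finite_carrier: "finite S"
    and maps_to: "x \<in> S \<Longrightarrow> P x \<in> S"
    and inj_on_carrier: "inj_on P S"
begin

lemma funpow_in: "x \<in> S \<Longrightarrow> (P ^^ i) x \<in> S"
  by (induction i) (auto simp: maps_to)

lemma forward_orbit_subset: "x \<in> S \<Longrightarrow> forward_orbit P x \<subseteq> S"
  unfolding forward_orbit_def using funpow_in by auto

lemma inj_on_funpow: "inj_on (P ^^ i) S"
proof (induction i)
  case (Suc i)
  have "inj_on P ((P ^^ i) ` S)"
    by (rule inj_on_subset[OF inj_on_carrier]) (use funpow_in in blast)
  then show ?case unfolding funpow.simps(2) by (rule comp_inj_on[OF Suc])
qed simp

lemma funpow_period: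
  assumes "x \<in> S"
  obtains n where "n > 0" "(P ^^ n) x = x"
proof -
  have return: "\<exists>n>0. (P ^^ n) x = x" if "i < j" "(P ^^ i) x = (P ^^ j) x" for i j
  proof -
    have "(P ^^ j) x = (P ^^ i) ((P ^^ (j - i)) x)"
      using that(1) funpow_add[of i "j - i" P] by simp
    then have "(P ^^ i) ((P ^^ (j - i)) x) = (P ^^ i) x" using that(2) by simp
    then have "(P ^^ (j - i)) x = x"
      using inj_on_funpow[of i] funpow_in assms unfolding inj_on_def by blast
    then show ?thesis using that(1) by (intro exI[of _ "j - i"]) auto
  qed
  have "finite (range (\<lambda>i. (P ^^ i) x))"
    using forward_orbit_subset[OF assms] finite_carrier
    unfolding forward_orbit_def by (rule finite_subset)
  then have "\<not> inj (\<lambda>i. (P ^^ i) x)" using finite_imageD infinite_UNIV_nat by blast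
  then obtain i j where ij: "i \<noteq> j" "(P ^^ i) x = (P ^^ j) x" unfolding inj_def by blast
  show thesis
  proof (cases "i < j")
    case True
    then show ?thesis using return[OF True ij(2)] that by blast
  next
    case False
    then have "j < i" using ij(1) by simp
    then show ?thesis using return[OF _ ij(2)[symmetric]] that by blast
  qed
qed

lemma funpow_mult_fixed: "(P ^^ n) x = x \<Longrightarrow> (P ^^ (n * k)) x = x"
  by (induction k) (auto simp: funpow_add)

lemma forward_orbit_sym:
  assumes "x \<in> S" "y \<in> forward_orbit P x"
  shows "x \<in> forward_orbit P y"
proof -
  obtain i where y: "y = (P ^^ i) x" using assms(2) unfolding forward_orbit_iff by auto
  obtain n where n: "n > 0" "(P ^^ n) x = x" using funpow_period assms(1) by blast
  have "(P ^^ (n * i - i)) y = (P ^^ (n * i - i + i)) x"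
    by (simp add: y funpow_add)
  also have "\<dots> = x" using n funpow_mult_fixed by simp
  finally show ?thesis unfolding forward_orbit_iff by (intro exI[of _ "n * i - i"]) (rule sym)
qed

lemma forward_orbit_eq:
  assumes "x \<in> S" "y \<in> forward_orbit P x"
  shows "forward_orbit P y = forward_orbit P x"
  using forward_orbit_mono[OF assms(2)] forward_orbit_mono[OF forward_orbit_sym[OF assms]] by (rule antisym)

text \<open>If Q = P \<circ> (a b) with a, b on different cycles of P, a Q-closed set containing a also
  contains b: from Q a = P b, Q walks along the P-cycle of b until it reaches b.\<close>

lemma transposed_closed_set_contains:
  assumes a: "a \<in> S" and b: "b \<in> S" "a \<notin> forward_orbit P b"
    and Q: "\<And>z. z \<in> S \<Longrightarrow> Q z = P (transpose a b z)"
    and Z: "\<And>z. z \<in> Z \<Longrightarrow> Q z \<in> Z" "a \<in> Z"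
  shows "b \<in> Z"
proof (rule ccontr)
  assume "b \<notin> Z"
  have iter: "(P ^^ i) (P b) \<in> Z" for i
  proof (induction i)
    case 0 show ?case using Z(1)[OF Z(2)] Q[OF a] by simp
  next
    case (Suc i)
    let ?z = "(P ^^ i) (P b)"
    have "?z = (P ^^ Suc i) b" by (simp only: funpow_Suc_right o_apply)
    then have "?z \<in> forward_orbit P b" unfolding forward_orbit_iff by blast
    then have "?z \<noteq> a" "?z \<noteq> b" using b(2) Suc \<open>b \<notin> Z\<close> by auto
    moreover have "?z \<in> S" using funpow_in[OF maps_to[OF b(1)]] .
    ultimately have "P ?z \<in> Z" using Z(1)[OF Suc] Q by simp
    then show ?case by simp
  qed
  obtain n where n: "n > 0" "(P ^^ n) b = b" using funpow_period b by blast
  have "(P ^^ (n - 1)) (P b) = (P ^^ Suc (n - 1)) b" by (simp only: funpow_Suc_right o_apply)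
  also have "\<dots> = b" using n by simp
  finally show False using iter[of "n - 1"] \<open>b \<notin> Z\<close> by simp
qed

lemma forward_orbit_transposed:
  assumes a: "a \<in> S" and b: "b \<in> S" "b \<notin> forward_orbit P a"
    and Q: "\<And>z. z \<in> S \<Longrightarrow> Q z = P (transpose a b z)"
  shows "b \<in> forward_orbit Q a"
    and "y \<in> S \<Longrightarrow> forward_orbit P y \<subseteq> forward_orbit Q y"
proof -
  have a_notin: "a \<notin> forward_orbit P b" using forward_orbit_sym[OF b(1)] b(2) by blast
  have Q': "\<And>z. z \<in> S \<Longrightarrow> Q z = P (transpose b a z)" using Q by (simp add: transpose_commute)
  have transpose_in: "transpose a b z \<in> S" if "z \<in> S" for z
    using that a b by (cases "z = a"; cases "z = b") auto
  have closed: "forward_orbit P y \<subseteq> forward_orbit Q y \<inter> S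
      \<and> (a \<in> forward_orbit Q y \<inter> S \<longleftrightarrow> b \<in> forward_orbit Q y \<inter> S)" if "y \<in> S" for y
  proof -
    let ?Z = "forward_orbit Q y \<inter> S"
    have Q_closed: "Q z \<in> ?Z" if "z \<in> ?Z" for z
      using that forward_orbit_step[of z Q y] Q maps_to transpose_in by simp
    have ab: "a \<in> ?Z \<longleftrightarrow> b \<in> ?Z"
      using transposed_closed_set_contains[OF a b(1) a_notin Q Q_closed]
        transposed_closed_set_contains[OF b(1) a b(2) Q' Q_closed] by blast
    have "P z \<in> ?Z" if "z \<in> ?Z" for z
    proof -
      have "transpose a b z \<in> ?Z" using that ab by (cases "z = a"; cases "z = b") auto
      then have "Q (transpose a b z) \<in> ?Z" by (rule Q_closed)
      then show ?thesis using Q[OF transpose_in, of z] that by simp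
    qed
    then have "forward_orbit P y \<subseteq> ?Z"
      using self_in_forward_orbit[of y Q] \<open>y \<in> S\<close> by (intro forward_orbit_subset_closed) auto
    then show ?thesis using ab by blast
  qed
  then show "y \<in> S \<Longrightarrow> forward_orbit P y \<subseteq> forward_orbit Q y" by blast
  show "b \<in> forward_orbit Q a" using closed[OF a] self_in_forward_orbit[of a Q] a by blast
qed

end

lemma single_valued_connected_to_sink:
  assumes "single_valued E" "\<And>y. (c, y) \<notin> E" "(c, y) \<in> (E \<union> E\<inverse>)\<^sup>*"
  shows "(y, c) \<in> E\<^sup>*"
  using assms(3)
proof (induction rule: rtrancl_induct)
  case (step y z)
  show ?case
  proof (cases "(y, z) \<in> E")
    case True
    then obtain y' where "(y, y') \<in> E" "(y', c) \<in> E\<^sup>*"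
      using step.IH assms(2) by (metis converse_rtranclE)
    then show ?thesis using True assms(1) by (metis single_valuedD)
  next
    case False
    then show ?thesis using step by (blast intro: converse_rtrancl_into_rtrancl)
  qed
qed simp

text \<open>In the application G is the state transformation of g, cl v the cycle of g through v,
  phi v = v', and T the set of states v with \<lambda>(v) = f3(lbit v) = 1.\<close>

locale cycle_joining = finite_permutation S G
  for S :: "'a set" and G +
  fixes phi :: "'a \<Rightarrow> 'a" and T :: "'a set" and cl :: "'a \<Rightarrow> 'b"
  assumes phi_in: "y \<in> S \<Longrightarrow> phi y \<in> S"
    and phi_phi: "y \<in> S \<Longrightarrow> phi (phi y) = y"
    and marked_subset: "T \<subseteq> S"
    and phi_unmarked: "v \<in> T \<Longrightarrow> phi v \<notin> T"
    and cl_eq_iff: "y \<in> S \<Longrightarrow> z \<in> S \<Longrightarrow> cl z = cl y \<longleftrightarrow> z \<in> forward_orbit G y"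
    and inj_on_cl: "inj_on cl T"
    and acyclic_marked_arcs: "acyclic {(cl v, cl (phi v)) | v. v \<in> T}"
begin

definition swap_marked :: "'a set \<Rightarrow> 'a \<Rightarrow> 'a" where
  "swap_marked T0 y = (if y \<in> T0 \<or> phi y \<in> T0 then phi y else y)"

definition joined :: "'a set \<Rightarrow> 'a \<Rightarrow> 'a" where
  "joined T0 y = G (swap_marked T0 y)"

definition marked_arcs :: "'a set \<Rightarrow> ('b \<times> 'b) set" where
  "marked_arcs T0 = {(cl v, cl (phi v)) | v. v \<in> T0}"

abbreviation connected :: "'a set \<Rightarrow> 'b \<Rightarrow> 'b \<Rightarrow> bool" where
  "connected T0 c c' \<equiv> (c, c') \<in> (marked_arcs T0 \<union> (marked_arcs T0)\<inverse>)\<^sup>*"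

lemma swap_marked_in: "y \<in> S \<Longrightarrow> swap_marked T0 y \<in> S"
  unfolding swap_marked_def using phi_in by auto

lemma swap_marked_involution:
  assumes "T0 \<subseteq> T" "y \<in> S"
  shows "swap_marked T0 (swap_marked T0 y) = y"
  using assms phi_phi phi_unmarked unfolding swap_marked_def by auto

lemma joined_in: "y \<in> S \<Longrightarrow> joined T0 y \<in> S"
  unfolding joined_def by (intro maps_to swap_marked_in)

lemma finite_permutation_joined:
  assumes "T0 \<subseteq> T"
  shows "finite_permutation S (joined T0)"
proof
  have "inj_on (swap_marked T0) S"
    by (rule inj_on_inverseI[where g = "swap_marked T0"]) (rule swap_marked_involution[OF assms])
  moreover have "inj_on G (swap_marked T0 ` S)"
    by (rule inj_on_subset[OF inj_on_carrier], rule image_subsetI, rule swap_marked_in)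
  ultimately have "inj_on (G \<circ> swap_marked T0) S" by (rule comp_inj_on)
  then show "inj_on (joined T0) S" unfolding joined_def comp_def .
qed (simp_all add: finite_carrier joined_in)

lemma cl_G:
  assumes "y \<in> S"
  shows "cl (G y) = cl y"
  using cl_eq_iff[OF assms maps_to[OF assms]] forward_orbit_step[OF self_in_forward_orbit] by simp

lemma marked_arc: "v \<in> T0 \<Longrightarrow> (cl v, cl (phi v)) \<in> marked_arcs T0"
  unfolding marked_arcs_def by blast

lemma marked_arcs_mono: "T0 \<subseteq> T1 \<Longrightarrow> marked_arcs T0 \<subseteq> marked_arcs T1"
  unfolding marked_arcs_def by blast

lemma connected_swap_marked:
  assumes "y \<in> S"
  shows "connected T0 (cl y) (cl (swap_marked T0 y))"
proof (cases "y \<in> T0")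
  case True
  then show ?thesis using marked_arc[OF True] unfolding swap_marked_def by auto
next
  case False
  show ?thesis
  proof (cases "phi y \<in> T0")
    case True
    then have "(cl (phi y), cl y) \<in> marked_arcs T0" using marked_arc phi_phi[OF assms] by metis
    then show ?thesis using True unfolding swap_marked_def by auto
  qed (use False in \<open>simp add: swap_marked_def\<close>)
qed

lemma connected_joined_orbit:
  assumes "y \<in> S" "z \<in> forward_orbit (joined T0) y"
  shows "connected T0 (cl y) (cl z)"
proof -
  have "z \<in> S \<and> connected T0 (cl y) (cl z)"
    using assms(2)
  proof (induction rule: forward_orbit_induct)
    case (step u)
    then have "connected T0 (cl u) (cl (joined T0 u))"
      using connected_swap_marked[of u T0] cl_G[OF swap_marked_in] unfolding joined_def by simp
    then show ?case using step joined_in by (blast intro: rtrancl_trans)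
  qed (simp add: assms(1))
  then show ?thesis ..
qed

lemma single_valued_marked_arcs:
  assumes "T0 \<subseteq> T"
  shows "single_valued (marked_arcs T0)"
proof (rule single_valuedI)
  fix c c1 c2 assume "(c, c1) \<in> marked_arcs T0" "(c, c2) \<in> marked_arcs T0"
  then obtain v1 v2 where "v1 \<in> T0" "v2 \<in> T0" "c = cl v1" "c = cl v2"
      "c1 = cl (phi v1)" "c2 = cl (phi v2)"
    unfolding marked_arcs_def by blast
  then show "c1 = c2" using inj_on_cl assms unfolding inj_on_def by blast
qed

lemma swap_marked_insert:
  assumes "insert w T0 \<subseteq> T" "w \<notin> T0" "z \<in> S"
  shows "swap_marked (insert w T0) z = swap_marked T0 (transpose w (phi w) z)"
proof -
  have w: "w \<in> S" "phi w \<notin> T0" "phi (phi w) = w"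
    using assms marked_subset phi_unmarked phi_phi by auto
  have "phi z \<noteq> w" if "z \<noteq> phi w" using that phi_phi[OF assms(3)] by auto
  then show ?thesis using w assms(2) unfolding swap_marked_def transpose_def by auto
qed

text \<open>If phi w were already on the cycle of w, the arcs of T0 would connect cl w to cl (phi w);
  as cl w is a sink of the forest of these arcs, cl (phi w) would reach cl w, closing a cycle with
  the arc of w.\<close>

lemma phi_notin_joined_orbit:
  assumes "T0 \<subseteq> T" "w \<in> T" "w \<notin> T0"
  shows "phi w \<notin> forward_orbit (joined T0) w"
proof
  assume "phi w \<in> forward_orbit (joined T0) w"
  moreover have "w \<in> S" using assms(2) marked_subset by blast
  ultimately have "connected T0 (cl w) (cl (phi w))" by (rule connected_joined_orbit[rotated])
  moreover have "(cl w, c) \<notin> marked_arcs T0" for c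
  proof
    assume "(cl w, c) \<in> marked_arcs T0"
    then obtain v where "v \<in> T0" "cl w = cl v" unfolding marked_arcs_def by blast
    then show False using inj_onD[OF inj_on_cl] assms by blast
  qed
  ultimately have "(cl (phi w), cl w) \<in> (marked_arcs T0)\<^sup>*"
    using single_valued_connected_to_sink[OF single_valued_marked_arcs[OF assms(1)]] by blast
  then have "(cl (phi w), cl w) \<in> (marked_arcs T)\<^sup>*"
    by (rule subsetD[OF rtrancl_mono[OF marked_arcs_mono[OF assms(1)]]])
  with marked_arc[OF assms(2)] have "(cl w, cl w) \<in> (marked_arcs T)\<^sup>+"
    by (rule rtrancl_into_trancl2)
  moreover have "acyclic (marked_arcs T)"
    using acyclic_marked_arcs unfolding marked_arcs_def .
  ultimately show False unfolding acyclic_def by simp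
qed

lemma phi_in_joined_orbit_of_finite:
  "finite T0 \<Longrightarrow> T0 \<subseteq> T \<Longrightarrow> v \<in> T0 \<Longrightarrow> phi v \<in> forward_orbit (joined T0) v"
proof (induction T0 arbitrary: v rule: finite_induct)
  case (insert w T0)
  have T0: "T0 \<subseteq> T" and w: "w \<in> T" "w \<in> S" "phi w \<in> S"
    using insert.prems marked_subset phi_in by auto
  interpret J: finite_permutation S "joined T0" by (rule finite_permutation_joined[OF T0])
  have "\<And>z. z \<in> S \<Longrightarrow> joined (insert w T0) z = joined T0 (transpose w (phi w) z)"
    using swap_marked_insert[OF insert.prems(1) insert.hyps(2)] unfolding joined_def by simp
  note join = J.forward_orbit_transposed[OF w(2,3) phi_notin_joined_orbit[OF T0 w(1) insert.hyps(2)]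
      this]
  show ?case
  proof (cases "v = w")
    case False
    then have "v \<in> S" "phi v \<in> forward_orbit (joined T0) v"
      using insert T0 marked_subset by auto
    then show ?thesis using join(2) by auto
  qed (use join(1) in simp)
qed simp

lemma swap_marked_in_joined_orbit:
  assumes "y \<in> S"
  shows "swap_marked T y \<in> forward_orbit (joined T) y"
proof -
  interpret J: finite_permutation S "joined T" by (rule finite_permutation_joined) simp
  have "finite T" using marked_subset finite_carrier by (rule finite_subset)
  note phi_in_orbit = phi_in_joined_orbit_of_finite[OF this order_refl]
  show ?thesis
  proof (cases "y \<in> T")
    case True
    then show ?thesis using phi_in_orbit unfolding swap_marked_def by simp
  next
    case False
    show ?thesis
    proof (cases "phi y \<in> T")
      case True
      then have "y \<in> forward_orbit (joined T) (phi y)"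
        using phi_in_orbit[OF True] phi_phi[OF assms] by simp
      then show ?thesis using J.forward_orbit_sym[OF phi_in[OF assms]] True
        unfolding swap_marked_def by simp
    qed (use False self_in_forward_orbit in \<open>simp add: swap_marked_def\<close>)
  qed
qed

lemma joined_orbit_swap_marked_closed:
  "y \<in> forward_orbit (joined T) x \<Longrightarrow> y \<in> S \<Longrightarrow> swap_marked T y \<in> forward_orbit (joined T) x"
  by (rule forward_orbit_trans, assumption, rule swap_marked_in_joined_orbit)

lemma joined_orbit_saturated:
  assumes "x \<in> S" "y \<in> forward_orbit (joined T) x" "z \<in> S" "cl z = cl y"
  shows "z \<in> forward_orbit (joined T) x"
proof -
  interpret J: finite_permutation S "joined T" by (rule finite_permutation_joined) simp
  let ?O = "forward_orbit (joined T) x"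
  have O_in: "u \<in> S" if "u \<in> ?O" for u
    using J.forward_orbit_subset[OF assms(1)] that by (rule subsetD)
  have "G u \<in> ?O" if "u \<in> ?O" for u
  proof -
    have "joined T (swap_marked T u) \<in> ?O"
      by (rule forward_orbit_step, rule joined_orbit_swap_marked_closed[OF that O_in[OF that]])
    then show ?thesis
      unfolding joined_def using swap_marked_involution[OF order_refl O_in[OF that]] by simp
  qed
  moreover have "z \<in> forward_orbit G y" using cl_eq_iff[OF O_in[OF assms(2)] assms(3)] assms(4) by simp
  ultimately show ?thesis using forward_orbit_subset_closed[of y ?O G] assms(2) by auto
qed

theorem joined_orbit_eq_component:
  assumes "x \<in> S"
  shows "forward_orbit (joined T) x = {y \<in> S. connected T (cl x) (cl y)}"
proof
  interpret J: finite_permutation S "joined T" by (rule finite_permutation_joined) simp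
  let ?O = "forward_orbit (joined T) x"
  show "?O \<subseteq> {y \<in> S. connected T (cl x) (cl y)}"
    using connected_joined_orbit[OF assms] J.forward_orbit_subset[OF assms] by auto
  have "\<forall>z\<in>S. cl z = c \<longrightarrow> z \<in> ?O" if "connected T (cl x) c" for c
    using that
  proof (induction rule: rtrancl_induct)
    case base
    show ?case using joined_orbit_saturated[OF assms self_in_forward_orbit] by simp
  next
    case (step c1 c2)
    then obtain v where v: "v \<in> T"
      "(c1, c2) = (cl v, cl (phi v)) \<or> (c1, c2) = (cl (phi v), cl v)"
      unfolding marked_arcs_def by blast
    have S: "v \<in> S" "phi v \<in> S" using v(1) marked_subset phi_in by auto
    have swap: "swap_marked T v = phi v" "swap_marked T (phi v) = v"
      using v(1) phi_phi[OF S(1)] unfolding swap_marked_def by auto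
    have "v \<in> ?O \<or> phi v \<in> ?O" using step.IH v(2) S by auto
    then have "v \<in> ?O \<and> phi v \<in> ?O"
      using joined_orbit_swap_marked_closed[of v x] joined_orbit_swap_marked_closed[of "phi v" x]
        swap S by auto
    then show ?case using joined_orbit_saturated[OF assms] v(2) by auto
  qed
  then show "{y \<in> S. connected T (cl x) (cl y)} \<subseteq> ?O" by auto
qed

end

section \<open>Windows of binary sequences\<close>

definition window :: "nat \<Rightarrow> (nat \<Rightarrow> bool) \<Rightarrow> nat \<Rightarrow> bool list" where
  "window m s t = map s [t..<t+m]"

lemma length_window [simp]: "length (window m s t) = m"
  unfolding window_def by simp

lemma nth_window: "i < m \<Longrightarrow> window m s t ! i = s (t + i)"
  unfolding window_def by simp

lemma hd_window: "0 < m \<Longrightarrow> hd (window m s t) = s t"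
  unfolding window_def by (simp add: upt_conv_Cons)

lemma drop_window: "n \<le> m \<Longrightarrow> drop n (window m s t) = window (m - n) s (t + n)"
  unfolding window_def by (simp add: drop_map)

lemma window_Suc: "0 < m \<Longrightarrow> window m s (Suc t) = tl (window m s t) @ [s (t + m)]"
  unfolding window_def by (simp add: upt_conv_Cons)

lemma generates_iff_next: "generates m f s \<longleftrightarrow> (\<forall>t. s (t + m) = f (window m s t))"
proof -
  have "map s [t..<t+m+1] = window m s t @ [s (t + m)]" for t
    unfolding window_def by simp
  then show ?thesis unfolding generates_def char_fun_def by (simp add: nth_append)
qed

lemma generates_iff_state_trans:
  "0 < m \<Longrightarrow> generates m f s \<longleftrightarrow> (\<forall>t. window m s (Suc t) = state_trans f (window m s t))"
  unfolding generates_iff_next state_trans_def by (simp add: window_Suc)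

lemma window_funpow:
  assumes "0 < m" "generates m f s" "\<And>y. length y = m \<Longrightarrow> state_trans f y = P y"
  shows "window m s i = (P ^^ i) (window m s 0)"
proof (induction i)
  case (Suc i)
  have "window m s (Suc i) = P (window m s i)"
    using assms(2) generates_iff_state_trans[OF assms(1)] assms(3)[of "window m s i"] by simp
  then show ?case using Suc by simp
qed simp

lemma Omega_k_cycle_of: "Omega_k m (cycle_of s) = range (window m s)"
proof -
  have "map (\<lambda>t. s (t + i)) [0..<m] = window m s i" for i
    by (rule nth_equalityI) (simp_all add: nth_window add.commute)
  moreover have "Omega_k m (cycle_of s) = range (\<lambda>i. map (\<lambda>t. s (t + i)) [0..<m])"
    unfolding Omega_k_def cycle_of_def by auto
  ultimately show ?thesis by simp
qed

lemma Omega_k_cycle_of_generated: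
  assumes "0 < m" "generates m f s" "\<And>y. length y = m \<Longrightarrow> state_trans f y = P y"
  shows "Omega_k m (cycle_of s) = forward_orbit P (window m s 0)"
proof -
  have "window m s = (\<lambda>i. (P ^^ i) (window m s 0))" by (rule ext) (rule window_funpow[OF assms])
  then show ?thesis unfolding Omega_k_cycle_of forward_orbit_def by (rule arg_cong)
qed

lemma length_if_in_Omega_k: "v \<in> Omega_k m c \<Longrightarrow> length v = m"
  unfolding Omega_k_def by auto

lemma cycle_of_subset:
  assumes "0 < m" "generates m f s1" "generates m f s2" "window m s1 0 = window m s2 j"
  shows "cycle_of s1 \<subseteq> cycle_of s2"
proof
  have "window m s1 t = window m s2 (t + j)" for t
  proof (induction t)
    case (Suc t)
    then show ?case using assms(2,3) generates_iff_state_trans[OF assms(1)] by simp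
  qed (simp add: assms(4))
  then have "s1 t = s2 (t + j)" for t
    using hd_window[OF assms(1), of s1 t] hd_window[OF assms(1), of s2 "t + j"] by simp
  then have shift: "(\<lambda>t. s1 (t + i)) = (\<lambda>t. s2 (t + (i + j)))" for i by (simp add: add.assoc)
  fix r assume "r \<in> cycle_of s1"
  then obtain i where "r = (\<lambda>t. s1 (t + i))" unfolding cycle_of_def by blast
  then show "r \<in> cycle_of s2" unfolding cycle_of_def shift by blast
qed

lemma nth_state_trans_funpow:
  "i + j < length y \<Longrightarrow> ((state_trans f ^^ j) y) ! i = y ! (i + j)"
proof (induction j arbitrary: y)
  case (Suc j)
  have len: "length (state_trans f y) = length y" using Suc.prems by (simp add: state_trans_def)
  have "((state_trans f ^^ Suc j) y) ! i = ((state_trans f ^^ j) (state_trans f y)) ! i"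
    by (simp add: funpow_swap1)
  also have "\<dots> = (state_trans f y) ! (i + j)"
    using Suc.IH[of "state_trans f y"] Suc.prems len by simp
  also have "\<dots> = y ! (i + Suc j)"
  proof -
    have "i + j < length (tl y)" using Suc.prems by simp
    then show ?thesis by (simp add: state_trans_def nth_append nth_tl)
  qed
  finally show ?case .
qed simp

lemma generated_through_state:
  assumes m: "0 < m" and perm: "finite_permutation {xs. length xs = m} (state_trans f)"
    and x: "length x = m"
  obtains s where "generates m f s" "periodic_seq s" "window m s 0 = x"
proof -
  interpret finite_permutation "{xs. length xs = m}" "state_trans f" by (rule perm)
  let ?F = "state_trans f"
  define s where "s t = hd ((?F ^^ t) x)" for t
  have len: "length ((?F ^^ t) x) = m" for t using funpow_in x by simp
  have window: "window m s t = (?F ^^ t) x" for t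
  proof (rule nth_equalityI)
    fix i assume "i < length (window m s t)"
    then have i: "i < m" by simp
    have "(?F ^^ i) ((?F ^^ t) x) \<noteq> []" using len[of "i + t"] m by (auto simp: funpow_add)
    then have "window m s t ! i = ((?F ^^ i) ((?F ^^ t) x)) ! 0"
      unfolding nth_window[OF i] s_def by (simp add: funpow_add hd_conv_nth add.commute)
    also have "\<dots> = ((?F ^^ t) x) ! i"
      using nth_state_trans_funpow[of 0 i] len i by simp
    finally show "window m s t ! i = (?F ^^ t) x ! i" .
  qed (simp add: len)
  have "generates m f s" unfolding generates_iff_state_trans[OF m] window by simp
  moreover obtain n where "n > 0" "(?F ^^ n) x = x" using funpow_period x by blast
  then have "periodic_seq s" unfolding periodic_seq_def s_def by (auto simp: funpow_add)
  ultimately show thesis using that window[of 0] by simp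
qed

lemma generated_next_eq_if_tl_window_eq:
  assumes "generates k h s" "0 < k" "k < m" "tl (window m s j) = tl (window m s t)"
  shows "s (j + m) = s (t + m)"
proof -
  define n where "n = m - k - 1"
  have mk: "m - k = Suc n" using assms(3) unfolding n_def by simp
  have "s (u + m) = h (drop n (tl (window m s u)))" for u
  proof -
    have "s (u + m) = s (u + (m - k) + k)" using assms(3) by simp
    also have "\<dots> = h (window k s (u + (m - k)))"
      using assms(1) unfolding generates_iff_next by simp
    also have "\<dots> = h (drop (m - k) (window m s u))"
      using drop_window[of "m - k" m s u] assms(3) by simp
    also have "\<dots> = h (drop n (tl (window m s u)))" unfolding mk drop_Suc ..
    finally show ?thesis .
  qed
  then show ?thesis using assms(4) by simp
qed

lemma tl_flip_first [simp]: "tl (flip_first v) = tl v"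
  unfolding flip_first_def by simp

lemma length_flip_first [simp]: "v \<noteq> [] \<Longrightarrow> length (flip_first v) = length v"
  unfolding flip_first_def by simp

lemma lbit_eq_tl: "length v = Suc n \<Longrightarrow> lbit n v = tl v"
  unfolding lbit_def by (simp add: drop_Suc)

lemma feedback_xor_of_char_fun:
  assumes "\<forall>xs. length xs = m + 1 \<longrightarrow>
             char_fun m f xs = (char_fun m g xs \<noteq> f3 (take (m - 1) (drop 1 xs)))"
    and "0 < m" "length y = m"
  shows "f y = (g y \<noteq> f3 (tl y))"
proof -
  have "take (m - 1) (drop 1 (y @ [False])) = tl y" using assms(2,3) by (simp add: drop_Suc)
  then show ?thesis
    using assms(1)[rule_format, of "y @ [False]"] assms(3) by (simp add: char_fun_def nth_append)
qed

section \<open>Cycles of a nonsingular feedback shift register\<close>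

locale nonsingular_fsr =
  fixes m :: nat and g :: "bool list \<Rightarrow> bool"
  assumes m_pos: "0 < m" and nonsingular: "nonsingular m g"
begin

lemma finite_permutation_state_trans: "finite_permutation {xs. length xs = m} (state_trans g)"
proof
  show "finite {xs :: bool list. length xs = m}"
    using finite_lists_length_eq[of "UNIV :: bool set" m] by simp
  show "inj_on (state_trans g) {xs. length xs = m}"
    using nonsingular unfolding nonsingular_def by (rule bij_betw_imp_inj_on)
qed (use m_pos in \<open>auto simp: state_trans_def\<close>)

sublocale states: finite_permutation "{xs. length xs = m}" "state_trans g"
  by (rule finite_permutation_state_trans)

lemma g_flip_first:
  assumes "length y = m"
  shows "g (flip_first y) = (\<not> g y)"
proof (rule ccontr)
  have "y \<noteq> []" using assms m_pos by auto
  assume "g (flip_first y) \<noteq> (\<not> g y)"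
  then have "state_trans g (flip_first y) = state_trans g y" unfolding state_trans_def by simp
  then have "flip_first y = y"
    using states.inj_on_carrier assms \<open>y \<noteq> []\<close> unfolding inj_on_def by simp
  then show False using \<open>y \<noteq> []\<close> unfolding flip_first_def by (cases y) auto
qed

lemma Omega_k_eq_forward_orbit:
  assumes "c \<in> Omega m g" "v \<in> Omega_k m c"
  shows "Omega_k m c = forward_orbit (state_trans g) v"
proof -
  obtain s where s: "c = cycle_of s" "generates m g s" using assms(1) unfolding Omega_def by auto
  then have c: "Omega_k m c = forward_orbit (state_trans g) (window m s 0)"
    using Omega_k_cycle_of_generated[OF m_pos] by blast
  moreover have "length (window m s 0) = m" by simp
  ultimately show ?thesis using states.forward_orbit_eq[of "window m s 0" v] assms(2) by simp
qed

lemma Omega_eq_if_common_state: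
  assumes "c1 \<in> Omega m g" "c2 \<in> Omega m g" "v \<in> Omega_k m c1" "v \<in> Omega_k m c2"
  shows "c1 = c2"
proof -
  have sub: "c1 \<subseteq> c2" if c: "c1 \<in> Omega m g" "c2 \<in> Omega m g" "Omega_k m c1 = Omega_k m c2"
    for c1 c2
  proof -
    obtain s1 s2 where s: "c1 = cycle_of s1" "generates m g s1" "c2 = cycle_of s2" "generates m g s2"
      using c(1,2) unfolding Omega_def by blast
    then have "window m s1 0 \<in> range (window m s2)" using c(3) Omega_k_cycle_of by auto
    then show ?thesis using cycle_of_subset[OF m_pos s(2,4)] s(1,3) by auto
  qed
  have "Omega_k m c1 = Omega_k m c2"
    using Omega_k_eq_forward_orbit[OF assms(1,3)] Omega_k_eq_forward_orbit[OF assms(2,4)] by simp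
  then show ?thesis using sub assms(1,2) by blast
qed

lemma ex1_cycle_through:
  assumes "length v = m"
  shows "\<exists>!c. c \<in> Omega m g \<and> v \<in> Omega_k m c"
proof -
  obtain s where s: "generates m g s" "periodic_seq s" "window m s 0 = v"
    using generated_through_state[OF m_pos finite_permutation_state_trans assms] .
  then have "cycle_of s \<in> Omega m g" "v \<in> Omega_k m (cycle_of s)"
    unfolding Omega_def Omega_k_cycle_of by auto
  then show ?thesis using Omega_eq_if_common_state by blast
qed

definition cycle_through :: "bool list \<Rightarrow> (nat \<Rightarrow> bool) set" where
  "cycle_through v = (THE c. c \<in> Omega m g \<and> v \<in> Omega_k m c)"

lemma cycle_through:
  assumes "length v = m"
  shows "cycle_through v \<in> Omega m g" "v \<in> Omega_k m (cycle_through v)"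
  using theI'[OF ex1_cycle_through[OF assms]] unfolding cycle_through_def by blast+

lemma cycle_through_eq: "c \<in> Omega m g \<Longrightarrow> v \<in> Omega_k m c \<Longrightarrow> cycle_through v = c"
  using ex1_cycle_through[OF length_if_in_Omega_k] unfolding cycle_through_def by (rule the1_equality) auto

lemma cycle_through_eq_iff:
  assumes "length y = m" "length z = m"
  shows "cycle_through z = cycle_through y \<longleftrightarrow> z \<in> forward_orbit (state_trans g) y"
  using cycle_through[OF assms(1)] cycle_through[OF assms(2)] cycle_through_eq
    Omega_k_eq_forward_orbit by metis

end

section \<open>Joining the cycles of g\<close>

definition joining_digraph ::
    "nat \<Rightarrow> (bool list \<Rightarrow> bool) \<Rightarrow> (bool list \<Rightarrow> bool) \<Rightarrow> (bool list \<Rightarrow> bool)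
      \<Rightarrow> ((nat \<Rightarrow> bool) set \<times> (nat \<Rightarrow> bool) set) set" where
  "joining_digraph m g f3 lam = {(c1, c2). c1 \<in> Omega m g \<and> c2 \<in> Omega m g \<and>
     (\<exists>v \<in> Omega_k m c1. f3 (lbit (m - 1) v) \<and> lam v \<and> flip_first v \<in> Omega_k m c2)}"

locale fsr_join = nonsingular_fsr m g for m g +
  fixes f f3 lam :: "bool list \<Rightarrow> bool"
  assumes feedback_xor: "length y = m \<Longrightarrow> f y = (g y \<noteq> f3 (tl y))"
    and card_marked_le_1: "c \<in> Omega m g \<Longrightarrow> card {v \<in> Omega_k m c. lam v} \<le> 1"
    and not_both_marked: "length v = m \<Longrightarrow> \<not> (lam v \<and> lam (flip_first v))"
    and marked_cover: "length u = m - 1 \<Longrightarrow> f3 u \<Longrightarrow> \<exists>b. lam (b # u)"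
    and acyclic_joining_digraph: "acyclic (joining_digraph m g f3 lam)"
begin

definition marked :: "bool list set" where
  "marked = {v. length v = m \<and> lam v \<and> f3 (tl v)}"

lemma f3_tl_iff_marked:
  assumes "length y = m"
  shows "f3 (tl y) \<longleftrightarrow> y \<in> marked \<or> flip_first y \<in> marked"
proof -
  have "y \<noteq> []" using assms m_pos by auto
  have "lam y \<or> lam (flip_first y)" if f3: "f3 (tl y)"
  proof -
    obtain b where "lam (b # tl y)" using marked_cover[of "tl y"] f3 assms by auto
    moreover have "b # tl y = y \<or> b # tl y = flip_first y"
      using \<open>y \<noteq> []\<close> unfolding flip_first_def by (cases y) auto
    ultimately show ?thesis by auto
  qed
  then show ?thesis using assms \<open>y \<noteq> []\<close> unfolding marked_def by auto
qed

lemma joining_digraph_eq_marked_arcs: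
  "joining_digraph m g f3 lam = {(cycle_through v, cycle_through (flip_first v)) | v. v \<in> marked}"
proof (intro set_eqI iffI)
  fix e assume "e \<in> joining_digraph m g f3 lam"
  then obtain c1 c2 v where e: "e = (c1, c2)" "c1 \<in> Omega m g" "c2 \<in> Omega m g"
    "v \<in> Omega_k m c1" "f3 (lbit (m - 1) v)" "lam v" "flip_first v \<in> Omega_k m c2"
    unfolding joining_digraph_def by blast
  have "length v = m" using e(4) by (rule length_if_in_Omega_k)
  then have "v \<in> marked" using e(5,6) m_pos lbit_eq_tl[of v "m - 1"] unfolding marked_def by simp
  moreover have "e = (cycle_through v, cycle_through (flip_first v))"
    using e(1) cycle_through_eq[OF e(2,4)] cycle_through_eq[OF e(3,7)] by simp
  ultimately show "e \<in> {(cycle_through v, cycle_through (flip_first v)) | v. v \<in> marked}"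
    by blast
next
  fix e assume "e \<in> {(cycle_through v, cycle_through (flip_first v)) | v. v \<in> marked}"
  then obtain v where e: "e = (cycle_through v, cycle_through (flip_first v))" "v \<in> marked"
    by blast
  then have v: "length v = m" "length (flip_first v) = m" "lam v" "f3 (lbit (m - 1) v)"
    using m_pos lbit_eq_tl[of v "m - 1"] unfolding marked_def by auto
  note c = cycle_through[OF v(1)] cycle_through[OF v(2)]
  show "e \<in> joining_digraph m g f3 lam"
    unfolding joining_digraph_def e(1) using c(1,3) bexI[of _ v, OF _ c(2)] v(3,4) c(4) by simp
qed

sublocale join: cycle_joining "{xs. length xs = m}" "state_trans g" flip_first marked cycle_through
proof (intro cycle_joining.intro cycle_joining_axioms.intro)
  show "finite_permutation {xs. length xs = m} (state_trans g)"
    by (rule finite_permutation_state_trans)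
  show "flip_first y \<in> {xs. length xs = m}" if "y \<in> {xs. length xs = m}" for y
    using that m_pos by (cases y) (auto simp: flip_first_def)
  show "flip_first (flip_first y) = y" if "y \<in> {xs. length xs = m}" for y
    using that m_pos unfolding flip_first_def by (cases y) auto
  show "marked \<subseteq> {xs. length xs = m}" unfolding marked_def by auto
  show "flip_first v \<notin> marked" if "v \<in> marked" for v
    using that not_both_marked unfolding marked_def by auto
  show "cycle_through z = cycle_through y \<longleftrightarrow> z \<in> forward_orbit (state_trans g) y"
    if "y \<in> {xs. length xs = m}" "z \<in> {xs. length xs = m}" for y z
    using cycle_through_eq_iff that by simp
  show "inj_on cycle_through marked"
  proof
    fix v1 v2 assume v: "v1 \<in> marked" "v2 \<in> marked" "cycle_through v1 = cycle_through v2"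
    let ?A = "{v \<in> Omega_k m (cycle_through v1). lam v}"
    have l: "length v1 = m" "length v2 = m" using v unfolding marked_def by auto
    have "v1 \<in> ?A" "v2 \<in> ?A"
      using cycle_through(2)[OF l(1)] cycle_through(2)[OF l(2)] v unfolding marked_def by auto
    moreover have "finite ?A"
      by (rule finite_subset[OF _ states.finite_carrier]) (auto dest: length_if_in_Omega_k)
    moreover have "card ?A \<le> Suc 0"
      using card_marked_le_1[OF cycle_through(1)[OF l(1)]] by simp
    ultimately show "v1 = v2" using card_le_Suc0_iff_eq by blast
  qed
  show "acyclic {(cycle_through v, cycle_through (flip_first v)) | v. v \<in> marked}"
    using acyclic_joining_digraph unfolding joining_digraph_eq_marked_arcs .
qed

lemma state_trans_f:
  assumes "length y = m"
  shows "state_trans f y = join.joined marked y"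
proof -
  have "y \<noteq> []" using assms m_pos by auto
  then show ?thesis
    using feedback_xor[OF assms] g_flip_first[OF assms] f3_tl_iff_marked[OF assms]
    unfolding join.joined_def join.swap_marked_def state_trans_def by auto
qed

lemma f_flip_first:
  assumes "length y = m"
  shows "f (flip_first y) = (\<not> f y)"
proof -
  have "y \<noteq> []" using assms m_pos by auto
  then show ?thesis
    using feedback_xor[of "flip_first y"] feedback_xor[OF assms] g_flip_first[OF assms] assms by simp
qed

lemma marked_arcs_eq_joining_digraph: "join.marked_arcs marked = joining_digraph m g f3 lam"
  unfolding join.marked_arcs_def joining_digraph_eq_marked_arcs ..

lemma Omega_k_f_cycle_of:
  assumes "generates m f s"
  shows "Omega_k m (cycle_of s) = forward_orbit (join.joined marked) (window m s 0)"
  using Omega_k_cycle_of_generated[OF m_pos assms state_trans_f] .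

theorem Omega_k_f_eq_Union_component:
  assumes "d \<in> Omega m f"
  shows "\<exists>C \<in> weak_components (Omega m g) (joining_digraph m g f3 lam).
           Omega_k m d = (\<Union>c \<in> C. Omega_k m c)"
proof -
  obtain s where s: "d = cycle_of s" "generates m f s" using assms unfolding Omega_def by auto
  let ?x = "window m s 0"
  let ?C = "{c \<in> Omega m g. (cycle_through ?x, c) \<in>
              (joining_digraph m g f3 lam \<union> (joining_digraph m g f3 lam)\<inverse>)\<^sup>*}"
  have "Omega_k m d = forward_orbit (join.joined marked) ?x"
    using Omega_k_f_cycle_of[OF s(2)] s(1) by simp
  also have "\<dots> = {y. length y = m \<and> join.connected marked (cycle_through ?x) (cycle_through y)}"
    using join.joined_orbit_eq_component[of ?x] by simp
  also have "\<dots> = (\<Union>c \<in> ?C. Omega_k m c)"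
  proof (intro set_eqI iffI)
    fix y assume "y \<in> {y. length y = m \<and> join.connected marked (cycle_through ?x) (cycle_through y)}"
    then show "y \<in> (\<Union>c \<in> ?C. Omega_k m c)"
      using cycle_through[of y] unfolding marked_arcs_eq_joining_digraph by auto
  next
    fix y assume "y \<in> (\<Union>c \<in> ?C. Omega_k m c)"
    then obtain c where "c \<in> ?C" "y \<in> Omega_k m c" by blast
    then show "y \<in> {y. length y = m \<and> join.connected marked (cycle_through ?x) (cycle_through y)}"
      using length_if_in_Omega_k cycle_through_eq unfolding marked_arcs_eq_joining_digraph by auto
  qed
  finally have "Omega_k m d = (\<Union>c \<in> ?C. Omega_k m c)" .
  moreover have "?C \<in> weak_components (Omega m g) (joining_digraph m g f3 lam)"
    unfolding weak_components_def using cycle_through(1)[of ?x] by auto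
  ultimately show ?thesis by blast
qed

theorem subFSR_Omega_subset:
  assumes "subFSR k h m f"
  shows "Omega k h \<subseteq> Omega m g"
proof
  fix d assume "d \<in> Omega k h"
  then obtain s where s: "d = cycle_of s" "generates k h s" "periodic_seq s"
    unfolding Omega_def by auto
  have k: "0 < k" "k < m" and gen_f: "generates m f s"
    using assms s(2) unfolding subFSR_def by auto
  note next_f = gen_f[unfolded generates_iff_next, rule_format]
  have orbit: "forward_orbit (join.joined marked) (window m s 0) = range (window m s)"
    using Omega_k_f_cycle_of[OF gen_f] unfolding Omega_k_cycle_of ..
  have unswapped: "\<not> f3 (tl (window m s t))" for t
  proof
    let ?y = "window m s t"
    assume "f3 (tl ?y)"
    then have "join.swap_marked marked ?y = flip_first ?y"
      using f3_tl_iff_marked[OF length_window] unfolding join.swap_marked_def by simp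
    then have "flip_first ?y \<in> forward_orbit (join.joined marked) ?y"
      using join.swap_marked_in_joined_orbit[of ?y] by simp
    moreover have "?y \<in> forward_orbit (join.joined marked) (window m s 0)"
      unfolding orbit by (rule rangeI)
    ultimately have "flip_first ?y \<in> range (window m s)"
      unfolding orbit[symmetric] by (rule forward_orbit_trans[rotated])
    then obtain j where j: "window m s j = flip_first ?y" by auto
    then have "s (j + m) = s (t + m)"
      by (intro generated_next_eq_if_tl_window_eq[OF s(2) k]) simp
    moreover have "s (j + m) = f (flip_first ?y)" using next_f[of j] j by simp
    ultimately show False using next_f[of t] f_flip_first[OF length_window] by simp
  qed
  have "generates m g s"
    unfolding generates_iff_next
  proof
    fix t
    show "s (t + m) = g (window m s t)"
      using next_f[of t] feedback_xor[OF length_window] unswapped[of t] by simp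
  qed
  then show "d \<in> Omega m g" unfolding Omega_def using s by blast
qed

end

theorem lemma7:
  fixes m :: nat and g1 f1 f3 lam :: "bool list \<Rightarrow> bool"
  assumes m_pos: "0 < m"
    and g_ns: "nonsingular m g1"
    and f_def: "\<forall>xs. length xs = m + 1 \<longrightarrow>
                  char_fun m f1 xs = (char_fun m g1 xs \<noteq> f3 (take (m - 1) (drop 1 xs)))"
    and cond_a: "\<forall>c \<in> Omega m g1. card {v \<in> Omega_k m c. lam v} \<le> 1"
    and cond_b: "\<forall>v. length v = m \<longrightarrow> \<not> (lam v \<and> lam (flip_first v))"
    and cond_c: "\<forall>u. length u = m - 1 \<and> f3 u \<longrightarrow> (\<exists>b. lam (b # u))"
    and D_def: "D = {(c1, c2). c1 \<in> Omega m g1 \<and> c2 \<in> Omega m g1 \<and>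
                   (\<exists>v \<in> Omega_k m c1. f3 (lbit (m - 1) v) \<and> lam v \<and>
                        flip_first v \<in> Omega_k m c2)}"
    and acyc: "acyclic D"
  shows "(\<forall>d \<in> Omega m f1. \<exists>C \<in> weak_components (Omega m g1) D.
            Omega_k m d = (\<Union>c \<in> C. Omega_k m c))
       \<and> (\<forall>k h. subFSR k h m f1 \<longrightarrow> Omega k h \<subseteq> Omega m g1)"
proof -
  have D: "D = joining_digraph m g1 f3 lam" unfolding D_def joining_digraph_def ..
  interpret fsr_join m g1 f1 f3 lam
  proof (intro fsr_join.intro nonsingular_fsr.intro fsr_join_axioms.intro)
    show "f1 y = (g1 y \<noteq> f3 (tl y))" if "length y = m" for y
      using feedback_xor_of_char_fun[OF f_def m_pos that] .
    show "acyclic (joining_digraph m g1 f3 lam)" using acyc unfolding D .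
  qed (use m_pos g_ns cond_a cond_b cond_c in simp_all)
  show ?thesis using Omega_k_f_eq_Union_component subFSR_Omega_subset unfolding D by blast
qed

end
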